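(* Let $G$ and $H$ be finite simple graphs without isolated vertices and let $g=(V'_0,V'_1,V'_2)$ be a $\gamma_{tR}(G\times H)$-function. Then $\gamma_{tR}(G\times H)\ge |V(G)||V(H)|-(\Delta(H)\Delta(G)-2)|V'_2|$ and $|V'_2|\ge\frac{|V(G)||V(H)|-|V'_1|}{\Delta(H)\Delta(G)}$. Moreover, if in addition $|V(G)||V(H)|=\Delta(H)\Delta(G)|V'_2|+|V'_1|$, then $\gamma_{tR}(G\times H)=|V(G)||V(H)|-(\Delta(H)\Delta(G)-2)|V'_2|$.
   Context: $\Delta(X)$ denotes the maximum degree of a graph $X$. A total Roman dominating function on a graph $X$ without isolated vertices is a map $f:V(X)\to\{0,1,2\}$, written $f=(V_0,V_1,V_2)$ with $V_i=\{v:f(v)=i\}$, such that every vertex of $V_0$ has a neighbor in $V_2$ and the subgraph induced by $V_1\cup V_2$ has no isolated vertices; $\gamma_{tR}(X)$ is the minimum of $\sum_v f(v)$ over such $f$, and a $\gamma_{tR}(X)$-function attains it. The direct product $G\times H$ has vertex set $V(G)\times V(H)$, with $(g,h)(g',h')$ an edge iff $gg'\in E(G)$ and $hh'\in E(H)$. *)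

theory Defs
  imports Complex_Main
begin

definition simple_graph :: "'a set \<Rightarrow> ('a \<Rightarrow> 'a \<Rightarrow> bool) \<Rightarrow> bool" where
  "simple_graph V E \<longleftrightarrow> finite V \<and> (\<forall>u v. E u v \<longrightarrow> u \<in> V \<and> v \<in> V)
     \<and> (\<forall>u v. E u v \<longrightarrow> E v u) \<and> (\<forall>v. \<not> E v v)"

definition neighbors :: "'a set \<Rightarrow> ('a \<Rightarrow> 'a \<Rightarrow> bool) \<Rightarrow> 'a \<Rightarrow> 'a set" where
  "neighbors V E v = {u \<in> V. E v u}"

definition degree :: "'a set \<Rightarrow> ('a \<Rightarrow> 'a \<Rightarrow> bool) \<Rightarrow> 'a \<Rightarrow> nat" where
  "degree V E v = card (neighbors V E v)"

definition max_degree :: "'a set \<Rightarrow> ('a \<Rightarrow> 'a \<Rightarrow> bool) \<Rightarrow> nat" where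
  "max_degree V E = Max (degree V E ` V)"

definition no_isolated :: "'a set \<Rightarrow> ('a \<Rightarrow> 'a \<Rightarrow> bool) \<Rightarrow> bool" where
  "no_isolated V E \<longleftrightarrow> (\<forall>v\<in>V. \<exists>u\<in>V. E v u)"

definition dprod_V :: "'a set \<Rightarrow> 'b set \<Rightarrow> ('a \<times> 'b) set" where
  "dprod_V VG VH = VG \<times> VH"

definition dprod_E :: "('a \<Rightarrow> 'a \<Rightarrow> bool) \<Rightarrow> ('b \<Rightarrow> 'b \<Rightarrow> bool)
    \<Rightarrow> ('a \<times> 'b) \<Rightarrow> ('a \<times> 'b) \<Rightarrow> bool" where
  "dprod_E EG EH x y \<longleftrightarrow> EG (fst x) (fst y) \<and> EH (snd x) (snd y)"

definition is_TRDF :: "'a set \<Rightarrow> ('a \<Rightarrow> 'a \<Rightarrow> bool) \<Rightarrow> ('a \<Rightarrow> nat) \<Rightarrow> bool" where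
  "is_TRDF V E f \<longleftrightarrow>
     (\<forall>v\<in>V. f v \<le> 2) \<and> (\<forall>v. v \<notin> V \<longrightarrow> f v = 0)
     \<and> (\<forall>v\<in>V. f v = 0 \<longrightarrow> (\<exists>u\<in>V. E v u \<and> f u = 2))
     \<and> (\<forall>v\<in>V. f v \<ge> 1 \<longrightarrow> (\<exists>u\<in>V. E v u \<and> f u \<ge> 1))"

definition weight :: "'a set \<Rightarrow> ('a \<Rightarrow> nat) \<Rightarrow> nat" where
  "weight V f = (\<Sum>v\<in>V. f v)"

definition gamma_tR :: "'a set \<Rightarrow> ('a \<Rightarrow> 'a \<Rightarrow> bool) \<Rightarrow> nat" where
  "gamma_tR V E = (LEAST w. \<exists>f. is_TRDF V E f \<and> weight V f = w)"

definition is_gamma_tR_function :: "'a set \<Rightarrow> ('a \<Rightarrow> 'a \<Rightarrow> bool) \<Rightarrow> ('a \<Rightarrow> nat) \<Rightarrow> bool" where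
  "is_gamma_tR_function V E f \<longleftrightarrow> is_TRDF V E f \<and> weight V f = gamma_tR V E"

definition level_set :: "'a set \<Rightarrow> ('a \<Rightarrow> nat) \<Rightarrow> nat \<Rightarrow> 'a set" where
  "level_set V f i = {v \<in> V. f v = i}"

end

theory Submission
  imports Defs
begin

text \<open>Every vertex of \<open>V\<^sub>0\<close> has a neighbour in \<open>V\<^sub>2\<close>, while every vertex of
\<open>V\<^sub>2\<close> has a neighbour in \<open>V\<^sub>1 \<union> V\<^sub>2\<close>; so a vertex of \<open>V\<^sub>2\<close> covers at most
\<open>\<Delta> - 1\<close> vertices of \<open>V\<^sub>0\<close>, giving \<open>|V\<^sub>0| + |V\<^sub>2| \<le> \<Delta> |V\<^sub>2|\<close>. In \<open>G \<times> H\<close> the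
neighbourhood of \<open>(a, b)\<close> is \<open>N(a) \<times> N(b)\<close>, so \<open>\<Delta> \<le> \<Delta>(G) \<Delta>(H)\<close>. Combined
with \<open>|V| = |V\<^sub>0| + |V\<^sub>1| + |V\<^sub>2|\<close> and \<open>\<gamma>\<^sub>t\<^sub>R = |V\<^sub>1| + 2 |V\<^sub>2|\<close> this gives all three
claims.\<close>

lemma degree_le_max_degree:
  assumes "finite V" "v \<in> V"
  shows "degree V E v \<le> max_degree V E"
  unfolding max_degree_def using assms by (intro Max_ge) auto

lemma neighbors_dprod:
  "neighbors (dprod_V VG VH) (dprod_E EG EH) (a, b) = neighbors VG EG a \<times> neighbors VH EH b"
  unfolding neighbors_def dprod_V_def dprod_E_def by auto

lemma degree_dprod:
  "degree (dprod_V VG VH) (dprod_E EG EH) (a, b) = degree VG EG a * degree VH EH b"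
  unfolding degree_def neighbors_dprod card_cartesian_product ..

lemma degree_dprod_le_max_degree:
  assumes "finite VG" "finite VH" "v \<in> dprod_V VG VH"
  shows "degree (dprod_V VG VH) (dprod_E EG EH) v \<le> max_degree VH EH * max_degree VG EG"
proof -
  obtain a b where v: "v = (a, b)" "a \<in> VG" "b \<in> VH"
    using assms(3) unfolding dprod_V_def by auto
  have "degree VG EG a * degree VH EH b \<le> max_degree VG EG * max_degree VH EH"
    using assms v by (intro mult_le_mono degree_le_max_degree)
  then show ?thesis
    unfolding v degree_dprod by (simp add: mult.commute)
qed

lemma card_level_sets:
  assumes "finite V" "\<forall>v\<in>V. f v \<le> 2"
  shows "card V = card (level_set V f 0) + card (level_set V f 1) + card (level_set V f 2)"
proof -
  have "V = (level_set V f 0 \<union> level_set V f 1) \<union> level_set V f 2"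
    using assms(2) unfolding level_set_def by force
  also have "card \<dots> = card (level_set V f 0 \<union> level_set V f 1) + card (level_set V f 2)"
    using assms(1) by (intro card_Un_disjoint) (auto simp: level_set_def)
  also have "card (level_set V f 0 \<union> level_set V f 1)
      = card (level_set V f 0) + card (level_set V f 1)"
    using assms(1) by (intro card_Un_disjoint) (auto simp: level_set_def)
  finally show ?thesis .
qed

lemma weight_level_sets:
  assumes "finite V" "\<forall>v\<in>V. f v \<le> 2"
  shows "weight V f = card (level_set V f 1) + 2 * card (level_set V f 2)"
proof -
  have "weight V f = (\<Sum>v\<in>V. of_bool (f v = 1) + 2 * of_bool (f v = 2))"
    unfolding weight_def
  proof (rule sum.cong)
    fix v assume "v \<in> V"
    then have "f v = 0 \<or> f v = 1 \<or> f v = 2" using assms(2) by force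
    then show "f v = of_bool (f v = 1) + 2 * of_bool (f v = 2)" by auto
  qed simp
  also have "\<dots> = card (level_set V f 1) + 2 * card (level_set V f 2)"
    using assms(1) by (simp add: sum.distrib sum_distrib_left level_set_def Int_def)
  finally show ?thesis .
qed

lemma card_neighbors_level_set_0_less_degree:
  assumes "finite V" "is_TRDF V E f" "v \<in> V" "f v \<ge> 1"
  shows "card (neighbors V E v \<inter> level_set V f 0) < degree V E v"
proof -
  obtain u where u: "u \<in> neighbors V E v" "f u \<ge> 1"
    using assms(2-4) unfolding is_TRDF_def neighbors_def by auto
  have "finite (neighbors V E v)"
    using assms(1) unfolding neighbors_def by auto
  moreover have "neighbors V E v \<inter> level_set V f 0 \<subseteq> neighbors V E v - {u}"
    using u(2) unfolding level_set_def by auto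
  ultimately have "card (neighbors V E v \<inter> level_set V f 0) \<le> card (neighbors V E v - {u})"
    by (intro card_mono) auto
  also have "\<dots> < degree V E v"
    unfolding degree_def using \<open>finite (neighbors V E v)\<close> u(1) by (rule card_Diff1_less)
  finally show ?thesis .
qed

lemma card_level_set_0_2_le:
  assumes fin: "finite V" and f: "is_TRDF V E f" and sym: "\<And>u v. E u v \<Longrightarrow> E v u"
    and deg: "\<And>v. v \<in> V \<Longrightarrow> degree V E v \<le> D"
  shows "card (level_set V f 0) + card (level_set V f 2) \<le> D * card (level_set V f 2)"
proof -
  let ?V0 = "level_set V f 0" and ?V2 = "level_set V f 2"
  let ?N = "\<lambda>v. neighbors V E v \<inter> ?V0"
  have fin2: "finite ?V2"
    using fin unfolding level_set_def by auto
  have "?V0 \<subseteq> (\<Union>v\<in>?V2. ?N v)"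
    using f sym unfolding is_TRDF_def level_set_def neighbors_def by blast
  then have "card ?V0 \<le> card (\<Union>v\<in>?V2. ?N v)"
    using fin2 fin by (intro card_mono) (auto simp: neighbors_def)
  also have "\<dots> \<le> (\<Sum>v\<in>?V2. card (?N v))"
    using fin2 by (rule card_UN_le)
  finally have "card ?V0 + card ?V2 \<le> (\<Sum>v\<in>?V2. card (?N v) + 1)"
    unfolding sum.distrib by simp
  also have "\<dots> \<le> (\<Sum>v\<in>?V2. D)"
  proof (rule sum_mono)
    fix v assume "v \<in> ?V2"
    then have "card (?N v) < degree V E v" "degree V E v \<le> D"
      using card_neighbors_level_set_0_less_degree[OF fin f] deg
      unfolding level_set_def by auto
    then show "card (?N v) + 1 \<le> D" by linarith
  qed
  finally show ?thesis
    by (simp add: mult.commute)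
qed

theorem corollary4p2:
  fixes VG :: "'a set" and EG :: "'a \<Rightarrow> 'a \<Rightarrow> bool"
    and VH :: "'b set" and EH :: "'b \<Rightarrow> 'b \<Rightarrow> bool"
    and g :: "'a \<times> 'b \<Rightarrow> nat"
  assumes "simple_graph VG EG" and "no_isolated VG EG"
    and "simple_graph VH EH" and "no_isolated VH EH"
    and "is_gamma_tR_function (dprod_V VG VH) (dprod_E EG EH) g"
  shows "(int (gamma_tR (dprod_V VG VH) (dprod_E EG EH))
           \<ge> int (card VG) * int (card VH)
             - (int (max_degree VH EH) * int (max_degree VG EG) - 2)
               * int (card (level_set (dprod_V VG VH) g 2)))
    \<and> (real (card (level_set (dprod_V VG VH) g 2))
           \<ge> (real (card VG) * real (card VH) - real (card (level_set (dprod_V VG VH) g 1)))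
             / (real (max_degree VH EH) * real (max_degree VG EG)))
    \<and> (card VG * card VH = max_degree VH EH * max_degree VG EG
             * card (level_set (dprod_V VG VH) g 2) + card (level_set (dprod_V VG VH) g 1)
         \<longrightarrow> int (gamma_tR (dprod_V VG VH) (dprod_E EG EH))
           = int (card VG) * int (card VH)
             - (int (max_degree VH EH) * int (max_degree VG EG) - 2)
               * int (card (level_set (dprod_V VG VH) g 2)))"
proof -
  let ?V = "dprod_V VG VH" and ?E = "dprod_E EG EH"
  let ?n1 = "card (level_set ?V g 1)" and ?n2 = "card (level_set ?V g 2)"
  have finite: "finite VG" "finite VH" and sym: "\<And>u v. ?E u v \<Longrightarrow> ?E v u"
    using assms(1,3) unfolding simple_graph_def dprod_E_def by auto
  then have fin: "finite ?V"
    unfolding dprod_V_def by simp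
  have g: "is_TRDF ?V ?E g" and gamma: "gamma_tR ?V ?E = weight ?V g"
    using assms(5) unfolding is_gamma_tR_function_def by auto
  then have le2: "\<forall>v\<in>?V. g v \<le> 2"
    unfolding is_TRDF_def by blast
  have card: "card VG * card VH = card (level_set ?V g 0) + ?n1 + ?n2"
    using card_level_sets[OF fin le2] by (simp add: dprod_V_def card_cartesian_product)
  have weight: "gamma_tR ?V ?E = ?n1 + 2 * ?n2"
    using weight_level_sets[OF fin le2] gamma by simp
  have count: "card (level_set ?V g 0) + ?n2 \<le> max_degree VH EH * max_degree VG EG * ?n2"
    using card_level_set_0_2_le[OF fin g sym] degree_dprod_le_max_degree[OF finite] by blast
  have "real (card VG) * real (card VH) - real ?n1
      \<le> real (max_degree VH EH) * real (max_degree VG EG) * real ?n2"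
    using arg_cong[OF card, of real] count by (simp flip: of_nat_mult of_nat_add)
  then have "(real (card VG) * real (card VH) - real ?n1)
      / (real (max_degree VH EH) * real (max_degree VG EG)) \<le> real ?n2"
    by (cases "real (max_degree VH EH) * real (max_degree VG EG) = 0")
      (simp_all only: div_by_0 of_nat_0_le_iff, simp add: pos_divide_le_eq mult_ac)
  then show ?thesis
    using arg_cong[OF card, of int] arg_cong[OF weight, of int] count
    by (auto simp flip: of_nat_mult of_nat_add of_nat_le_iff simp: algebra_simps)
qed

end
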